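(* Let $f:\mathbb R^n\to\mathbb R$ be a non-degenerate polynomial with $f(0)=0$. Then $$L_e(f)=\sup\{h(a):a\in R_1\},\qquad R_1=\{a\in\mathbb R^n_{\ge0}:0\le m_f(a)\le1\}.$$
   Context: Write $f=\sum_\nu c_\nu x^\nu$. $\Gamma_+(f)$ is the convex hull of $\bigcup_{c_\nu\ne0}(\nu+\mathbb R^n_{\ge0})$. For $a\in\mathbb R^n_{\ge0}$: $m_f(a)=\min\{\langle a,\nu\rangle:\nu\in\Gamma_+(f)\}$, $\gamma_f(a)=\{\nu\in\Gamma_+(f):\langle a,\nu\rangle=m_f(a)\}$, $s(a)=\sum_ia_i$, $h(a)=m_f(a)-s(a)$. For a face $\gamma$, $f_\gamma=\sum_{\nu\in\gamma}c_\nu x^\nu$; $f$ is non-degenerate if for every compact face $\gamma$, $\nabla f_\gamma$ does not vanish at points of $(\mathbb R^* )^n$ where $f_\gamma=0$. On $\mathbb R^n_{\ge0}$ put $a\sim b$ iff $\gamma_f(a)=\gamma_f(b)$; this gives a subdivision of $\mathbb R^n_{\ge0}$ into cones; $\Gamma^{(1)}(f)$ is the set of primitive integer generators of its one-dimensional cones and $\Gamma^{(1)}_+(f)=\{a\in\Gamma^{(1)}(f):m_f(a)>0\}$. The leading exponent is $L_e(f)=\sup\bigl(\{0\}\cup\{1-s(a)/m_f(a):a\in\Gamma^{(1)}_+(f)\}\bigr)$. *)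

theory Defs
  imports "HOL-Analysis.Analysis"
begin

text \<open>A real polynomial in n variables (n = CARD('n)) is given by its coefficient
  function c on exponent vectors nu in N^n, with finite support.\<close>

definition supp :: "(nat ^ 'n \<Rightarrow> real) \<Rightarrow> (nat ^ 'n) set" where
  "supp c = {nu. c nu \<noteq> 0}"

definition expv :: "nat ^ 'n \<Rightarrow> real ^ 'n" where
  "expv nu = (\<chi> i. real (nu $ i))"

definition monom :: "real ^ 'n \<Rightarrow> nat ^ 'n \<Rightarrow> real" where
  "monom x nu = (\<Prod>i\<in>UNIV. (x $ i) ^ (nu $ i))"

text \<open>f_S(x) = sum of c_nu x^nu over exponents nu lying in S; f itself is f_UNIV.\<close>
definition polyfun :: "(nat ^ 'n \<Rightarrow> real) \<Rightarrow> (real ^ 'n) set \<Rightarrow> real ^ 'n \<Rightarrow> real" where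
  "polyfun c S x = (\<Sum>nu\<in>{nu \<in> supp c. expv nu \<in> S}. c nu * monom x nu)"

definition nonneg_orthant :: "(real ^ 'n) set" where
  "nonneg_orthant = {y. \<forall>i. 0 \<le> y $ i}"

definition newton :: "(nat ^ 'n \<Rightarrow> real) \<Rightarrow> (real ^ 'n) set" where
  "newton c = convex hull (\<Union>nu\<in>supp c. {expv nu + y | y. y \<in> nonneg_orthant})"

definition mf :: "(nat ^ 'n \<Rightarrow> real) \<Rightarrow> real ^ 'n \<Rightarrow> real" where
  "mf c a = Inf {a \<bullet> v | v. v \<in> newton c}"

definition gammaf :: "(nat ^ 'n \<Rightarrow> real) \<Rightarrow> real ^ 'n \<Rightarrow> (real ^ 'n) set" where
  "gammaf c a = {v \<in> newton c. a \<bullet> v = mf c a}"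

definition ssum :: "real ^ 'n \<Rightarrow> real" where
  "ssum a = (\<Sum>i\<in>UNIV. a $ i)"

definition hf :: "(nat ^ 'n \<Rightarrow> real) \<Rightarrow> real ^ 'n \<Rightarrow> real" where
  "hf c a = mf c a - ssum a"

definition nondegenerate :: "(nat ^ 'n \<Rightarrow> real) \<Rightarrow> bool" where
  "nondegenerate c \<longleftrightarrow>
     (\<forall>\<gamma>. \<gamma> face_of newton c \<and> compact \<gamma> \<and> \<gamma> \<noteq> {} \<longrightarrow>
        (\<forall>x. (\<forall>i. x $ i \<noteq> 0) \<and> polyfun c \<gamma> x = 0 \<longrightarrow>
             \<not> ((polyfun c \<gamma>) has_derivative (\<lambda>h. 0)) (at x)))"

text \<open>The cone (equivalence class) of a in the subdivision of R^n_{>=0}.\<close>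
definition fcone :: "(nat ^ 'n \<Rightarrow> real) \<Rightarrow> real ^ 'n \<Rightarrow> (real ^ 'n) set" where
  "fcone c a = {b \<in> nonneg_orthant. gammaf c b = gammaf c a}"

definition Gamma1 :: "(nat ^ 'n \<Rightarrow> real) \<Rightarrow> (real ^ 'n) set" where
  "Gamma1 c = {expv k | k. Gcd (range (\<lambda>i. k $ i)) = 1 \<and> aff_dim (fcone c (expv k)) = 1}"

definition Gamma1_plus :: "(nat ^ 'n \<Rightarrow> real) \<Rightarrow> (real ^ 'n) set" where
  "Gamma1_plus c = {a \<in> Gamma1 c. mf c a > 0}"

definition leading_exponent :: "(nat ^ 'n \<Rightarrow> real) \<Rightarrow> real" where
  "leading_exponent c = Sup ({0} \<union> {1 - ssum a / mf c a | a. a \<in> Gamma1_plus c})"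

end

theory Submission
  imports Defs
begin

text \<open>Rescaling a to m_f(a) = 1 shows that every value 1 - s(a)/m_f(a) with a \<in> Gamma^(1)_+(f)
  is attained on R_1, and that the positive values of h on R_1 are bounded by the values 1 - s(a)
  on Q = {a \<ge> 0 | a \<bullet> \<nu> \<ge> 1 for all \<nu> in the support}. The linear function s attains its minimum
  on Q (below any given point) at an extreme point z. An extreme point of Q is cut out by its active
  constraints, which have integer coefficients; hence z is rational, m_f(z) = 1, and the cone of z in
  the subdivision is the open ray through z. A primitive integer multiple of z therefore lies in
  Gamma^(1)_+(f) and has s/m_f = s(z).\<close>

section \<open>The support function m_f\<close>

lemma inner_expv: "a \<bullet> expv nu = (\<Sum>i\<in>UNIV. a $ i * real (nu $ i))"
  by (simp add: inner_vec_def expv_def)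

lemma expv_nonneg: "expv nu \<in> nonneg_orthant"
  by (simp add: nonneg_orthant_def expv_def)

lemma scaleR_nonneg_orthant: "a \<in> nonneg_orthant \<Longrightarrow> 0 \<le> t \<Longrightarrow> t *\<^sub>R a \<in> nonneg_orthant"
  by (simp add: nonneg_orthant_def)

lemma inner_nonneg_orthant: "a \<in> nonneg_orthant \<Longrightarrow> y \<in> nonneg_orthant \<Longrightarrow> 0 \<le> a \<bullet> y"
  unfolding nonneg_orthant_def inner_vec_def by (auto intro!: sum_nonneg)

lemma ssum_inner: "ssum x = x \<bullet> (\<chi> i. 1)"
  by (simp add: ssum_def inner_vec_def)

lemma ssum_scaleR: "ssum (t *\<^sub>R x) = t * ssum x"
  by (simp add: ssum_inner)

lemma ssum_nonneg: "a \<in> nonneg_orthant \<Longrightarrow> 0 \<le> ssum a"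
  by (auto simp: ssum_def nonneg_orthant_def intro: sum_nonneg)

lemma expv_add_in_newton: "nu \<in> supp c \<Longrightarrow> y \<in> nonneg_orthant \<Longrightarrow> expv nu + y \<in> newton c"
  unfolding newton_def by (rule hull_inc) blast

lemma expv_in_newton: "nu \<in> supp c \<Longrightarrow> expv nu \<in> newton c"
  using expv_add_in_newton[of nu c 0] by (simp add: nonneg_orthant_def)

lemma newton_inner_lower_bound:
  assumes "\<forall>nu\<in>supp c. M \<le> a \<bullet> expv nu" "a \<in> nonneg_orthant" "v \<in> newton c"
  shows "M \<le> a \<bullet> v"
proof -
  have "newton c \<subseteq> {v. M \<le> a \<bullet> v}"
    unfolding newton_def
  proof (rule hull_minimal)
    show "(\<Union>nu\<in>supp c. {expv nu + y |y. y \<in> nonneg_orthant}) \<subseteq> {v. M \<le> a \<bullet> v}"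
      using assms(1,2) inner_nonneg_orthant by (fastforce simp: inner_add_right)
  qed (rule convex_halfspace_ge)
  then show ?thesis using assms(3) by auto
qed

lemma mf_eqI:
  assumes "a \<in> nonneg_orthant" "nu0 \<in> supp c" "a \<bullet> expv nu0 = M"
    and "\<forall>nu\<in>supp c. M \<le> a \<bullet> expv nu"
  shows "mf c a = M"
  unfolding mf_def
proof (rule cInf_eq_minimum)
  show "M \<in> {a \<bullet> v |v. v \<in> newton c}" using assms expv_in_newton by blast
  show "\<And>x. x \<in> {a \<bullet> v |v. v \<in> newton c} \<Longrightarrow> M \<le> x"
    using newton_inner_lower_bound assms by blast
qed

lemma mf_eq_Min:
  assumes "finite (supp c)" "supp c \<noteq> {}" "a \<in> nonneg_orthant"
  shows "mf c a = Min ((\<lambda>nu. a \<bullet> expv nu) ` supp c)"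
proof -
  let ?M = "Min ((\<lambda>nu. a \<bullet> expv nu) ` supp c)"
  have "?M \<in> (\<lambda>nu. a \<bullet> expv nu) ` supp c" using assms by (intro Min_in) auto
  then obtain nu0 where "nu0 \<in> supp c" "a \<bullet> expv nu0 = ?M" by auto
  then show ?thesis using assms by (intro mf_eqI) auto
qed

lemma mf_attained:
  assumes "finite (supp c)" "supp c \<noteq> {}" "a \<in> nonneg_orthant"
  obtains nu0 where "nu0 \<in> supp c" "a \<bullet> expv nu0 = mf c a"
proof -
  have "mf c a \<in> (\<lambda>nu. a \<bullet> expv nu) ` supp c"
    unfolding mf_eq_Min[OF assms] using assms by (intro Min_in) auto
  then show ?thesis using that by auto
qed

lemma mf_le_inner_expv:
  assumes "finite (supp c)" "a \<in> nonneg_orthant" "nu \<in> supp c"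
  shows "mf c a \<le> a \<bullet> expv nu"
  using assms by (subst mf_eq_Min) auto

lemma mf_nonneg:
  assumes "finite (supp c)" "supp c \<noteq> {}" "a \<in> nonneg_orthant"
  shows "0 \<le> mf c a"
proof -
  obtain nu0 where "a \<bullet> expv nu0 = mf c a" using mf_attained[OF assms] .
  then show ?thesis using inner_nonneg_orthant[OF assms(3) expv_nonneg] by metis
qed

lemma mf_scaleR:
  assumes "finite (supp c)" "supp c \<noteq> {}" "a \<in> nonneg_orthant" "0 \<le> t"
  shows "mf c (t *\<^sub>R a) = t * mf c a"
proof -
  obtain nu0 where "nu0 \<in> supp c" "a \<bullet> expv nu0 = mf c a"
    using mf_attained[OF assms(1-3)] .
  moreover have "\<forall>nu\<in>supp c. t * mf c a \<le> (t *\<^sub>R a) \<bullet> expv nu"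
    using mf_le_inner_expv[OF assms(1,3)] assms(4) by (auto intro: mult_left_mono)
  ultimately show ?thesis
    using assms scaleR_nonneg_orthant by (intro mf_eqI[of _ nu0]) auto
qed

lemma gammaf_scaleR:
  assumes "finite (supp c)" "supp c \<noteq> {}" "a \<in> nonneg_orthant" "0 < t"
  shows "gammaf c (t *\<^sub>R a) = gammaf c a"
  using mf_scaleR[OF assms(1-3), of t] assms(4) unfolding gammaf_def by auto

lemma gammaf_zero:
  assumes "finite (supp c)" "supp c \<noteq> {}"
  shows "gammaf c 0 = newton c"
  using mf_scaleR[OF assms, of 0 0] by (simp add: gammaf_def nonneg_orthant_def)

section \<open>Extreme points of the polyhedron m_f \<ge> 1\<close>

definition dual_polyhedron :: "(nat ^ 'n \<Rightarrow> real) \<Rightarrow> (real ^ 'n) set" where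
  "dual_polyhedron c = {a \<in> nonneg_orthant. \<forall>nu\<in>supp c. 1 \<le> a \<bullet> expv nu}"

lemma dual_polyhedron_iff:
  assumes "finite (supp c)" "supp c \<noteq> {}"
  shows "a \<in> dual_polyhedron c \<longleftrightarrow> a \<in> nonneg_orthant \<and> 1 \<le> mf c a"
proof (cases "a \<in> nonneg_orthant")
  case True
  obtain nu0 where "nu0 \<in> supp c" "a \<bullet> expv nu0 = mf c a" using mf_attained[OF assms True] .
  then show ?thesis
    using mf_le_inner_expv[OF assms(1) True] True by (force simp: dual_polyhedron_def)
qed (simp add: dual_polyhedron_def)

lemma dual_polyhedron_eq_halfspaces:
  "dual_polyhedron c = (\<Inter>i. {x. 0 \<le> axis i 1 \<bullet> x}) \<inter> (\<Inter>nu\<in>supp c. {x. 1 \<le> expv nu \<bullet> x})"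
  by (auto simp: dual_polyhedron_def nonneg_orthant_def inner_axis inner_commute)

lemma convex_dual_polyhedron: "convex (dual_polyhedron c)"
  by (simp add: dual_polyhedron_eq_halfspaces convex_INT convex_Int convex_halfspace_ge)

lemma closed_dual_polyhedron: "closed (dual_polyhedron c)"
  by (simp add: dual_polyhedron_eq_halfspaces closed_INT closed_Int closed_halfspace_ge)

lemma dual_polyhedron_extreme_point_below:
  assumes "a \<in> dual_polyhedron c"
  obtains z where "z extreme_point_of dual_polyhedron c" "ssum z \<le> ssum a"
proof -
  let ?Q = "dual_polyhedron c" and ?one = "\<chi> i. 1 :: real ^ 'n"
  define P where "P = ?Q \<inter> {x. ?one \<bullet> x \<le> ssum a}"
  have "bounded P"
  proof -
    have "norm x \<le> ssum a" if "x \<in> P" for x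
    proof -
      have "norm x \<le> (\<Sum>i\<in>UNIV. \<bar>x$i\<bar>)" by (rule norm_le_l1_cart)
      also have "\<dots> = ssum x"
        using that by (simp add: P_def dual_polyhedron_def nonneg_orthant_def ssum_def)
      finally show ?thesis using that by (simp add: P_def ssum_inner inner_commute)
    qed
    then show ?thesis by (auto simp: bounded_iff)
  qed
  then have "compact P"
    unfolding P_def by (simp add: compact_eq_bounded_closed closed_Int closed_dual_polyhedron closed_halfspace_le)
  moreover have "a \<in> P" using assms by (simp add: P_def ssum_inner inner_commute)
  moreover have "continuous_on P ssum" unfolding ssum_inner by (intro continuous_intros)
  ultimately obtain x0 where x0: "x0 \<in> P" "\<And>y. y \<in> P \<Longrightarrow> ssum x0 \<le> ssum y"
    using continuous_attains_inf[of P ssum] by blast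
  have x0_min: "ssum x0 \<le> ?one \<bullet> x" if "x \<in> ?Q" for x
    using x0 that by (fastforce simp: P_def ssum_inner inner_commute)
  define F where "F = ?Q \<inter> {x. ?one \<bullet> x = ssum x0}"
  have face: "F face_of ?Q"
    unfolding F_def using x0_min by (intro face_of_Int_supporting_hyperplane_ge convex_dual_polyhedron)
  have "F = P \<inter> {x. ?one \<bullet> x = ssum x0}"
    using x0 by (auto simp: F_def P_def ssum_inner inner_commute)
  then have "compact F" using \<open>compact P\<close> by (simp add: compact_Int_closed closed_hyperplane)
  moreover have "F \<noteq> {}" using x0 by (auto simp: F_def P_def ssum_inner inner_commute)
  ultimately obtain z where "z extreme_point_of F"
    using extreme_point_exists_convex face_of_imp_convex[OF face] by blast
  then have "z extreme_point_of ?Q" "z \<in> F" using extreme_point_of_face[OF face] by auto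
  moreover have "ssum x0 \<le> ssum a" using x0 \<open>a \<in> P\<close> by blast
  ultimately show ?thesis using that by (auto simp: F_def ssum_inner inner_commute)
qed

lemma eventually_abs_mult_le:
  "0 < u \<Longrightarrow> eventually (\<lambda>e::real. \<bar>e * w\<bar> \<le> u) (at_right 0)"
proof -
  assume "0 < u"
  have "((\<lambda>e. \<bar>e * w\<bar>) \<longlongrightarrow> \<bar>0 * w\<bar>) (at_right (0::real))" by (intro tendsto_intros)
  from order_tendstoD(2)[OF this[simplified] \<open>0 < u\<close>] show ?thesis
    by eventually_elim simp
qed

lemma eventually_perturbation_in_dual_polyhedron:
  assumes fin: "finite (supp c)" and zQ: "z \<in> dual_polyhedron c"
    and coord: "\<forall>i. z$i = 0 \<longrightarrow> d$i = 0"
    and active: "\<forall>nu\<in>supp c. z \<bullet> expv nu = 1 \<longrightarrow> d \<bullet> expv nu = 0"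
  shows "eventually (\<lambda>e. z + e *\<^sub>R d \<in> dual_polyhedron c \<and> z - e *\<^sub>R d \<in> dual_polyhedron c)
    (at_right 0)"
proof -
  have "eventually (\<lambda>e. \<bar>e * d$i\<bar> \<le> z$i) (at_right 0)" for i
  proof (cases "z$i = 0")
    case False
    then have "0 < z$i" using zQ by (auto simp: dual_polyhedron_def nonneg_orthant_def order_le_less)
    then show ?thesis by (rule eventually_abs_mult_le)
  qed (use coord in simp)
  moreover have "eventually (\<lambda>e. \<bar>e * (d \<bullet> expv nu)\<bar> \<le> z \<bullet> expv nu - 1) (at_right 0)"
    if "nu \<in> supp c" for nu
  proof (cases "z \<bullet> expv nu = 1")
    case False
    then have "0 < z \<bullet> expv nu - 1" using zQ that by (force simp: dual_polyhedron_def)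
    then show ?thesis by (rule eventually_abs_mult_le)
  qed (use active that in simp)
  ultimately have "eventually (\<lambda>e. (\<forall>i. \<bar>e * d$i\<bar> \<le> z$i) \<and>
      (\<forall>nu\<in>supp c. \<bar>e * (d \<bullet> expv nu)\<bar> \<le> z \<bullet> expv nu - 1)) (at_right 0)"
    by (intro eventually_conj eventually_all_finite eventually_ball_finite fin) auto
  then show ?thesis
  proof eventually_elim
    case (elim e)
    have "0 \<le> z$i + e * d$i" "0 \<le> z$i - e * d$i" for i
      using elim[THEN conjunct1, rule_format, of i] unfolding abs_le_iff by linarith+
    moreover have "1 \<le> z \<bullet> expv nu + e * (d \<bullet> expv nu)" "1 \<le> z \<bullet> expv nu - e * (d \<bullet> expv nu)"
      if "nu \<in> supp c" for nu
      using elim[THEN conjunct2, rule_format, OF that] unfolding abs_le_iff by linarith+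
    ultimately show ?case
      by (simp add: dual_polyhedron_def nonneg_orthant_def inner_add_left inner_diff_left)
  qed
qed

text \<open>Otherwise z is the midpoint of z - e d and z + e d, which lie in the polyhedron for small e > 0.\<close>
lemma extreme_point_dual_polyhedron_rigid:
  assumes fin: "finite (supp c)" and z: "z extreme_point_of dual_polyhedron c"
    and coord: "\<forall>i. z$i = 0 \<longrightarrow> d$i = 0"
    and active: "\<forall>nu\<in>supp c. z \<bullet> expv nu = 1 \<longrightarrow> d \<bullet> expv nu = 0"
  shows "d = 0"
proof (rule ccontr)
  assume "d \<noteq> 0"
  have "z \<in> dual_polyhedron c" using z by (simp add: extreme_point_of_def)
  from eventually_conj[OF eventually_at_right_less
      eventually_perturbation_in_dual_polyhedron[OF fin this coord active]]
  obtain e where "0 < e" "z + e *\<^sub>R d \<in> dual_polyhedron c" "z - e *\<^sub>R d \<in> dual_polyhedron c"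
    using eventually_happens'[OF trivial_limit_at_right_real] by blast
  moreover have "z - e *\<^sub>R d \<noteq> z + e *\<^sub>R d"
  proof
    assume "z - e *\<^sub>R d = z + e *\<^sub>R d"
    then have "(2 * e) *\<^sub>R d = 0" by (simp add: algebra_simps flip: scaleR_2)
    then show False using \<open>0 < e\<close> \<open>d \<noteq> 0\<close> by simp
  qed
  moreover have "midpoint (z - e *\<^sub>R d) (z + e *\<^sub>R d) = z" by (simp add: midpoint_def vec_eq_iff)
  ultimately show False using z midpoint_in_open_segment unfolding extreme_point_of_def by metis
qed

lemma extreme_point_dual_polyhedron_mf:
  assumes fin: "finite (supp c)" and ne: "supp c \<noteq> {}"
    and z: "z extreme_point_of dual_polyhedron c"
  shows "mf c z = 1"
proof (rule ccontr)
  assume "mf c z \<noteq> 1"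
  have zQ: "z \<in> dual_polyhedron c" using z by (simp add: extreme_point_of_def)
  then have "1 < mf c z" using \<open>mf c z \<noteq> 1\<close> dual_polyhedron_iff[OF fin ne] by auto
  then have "\<forall>nu\<in>supp c. z \<bullet> expv nu \<noteq> 1"
    using mf_le_inner_expv[OF fin] zQ by (fastforce simp: dual_polyhedron_def)
  then have "z = 0" by (intro extreme_point_dual_polyhedron_rigid[OF fin z]) auto
  then show False using zQ ne by (auto simp: dual_polyhedron_def)
qed

section \<open>Extreme points span rays of the subdivision\<close>

lemma aff_dim_open_ray:
  fixes a :: "'a::euclidean_space"
  assumes "a \<noteq> 0"
  shows "aff_dim {t *\<^sub>R a | t. 0 < t} = 1"
proof -
  let ?R = "{t *\<^sub>R a | t. 0 < t}"
  have "?R \<subseteq> span {a}" by (auto intro: span_mul span_base)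
  then have "aff_dim ?R \<le> aff_dim (span {a})" by (rule aff_dim_subset)
  also have "\<dots> = 1" using assms by (simp add: aff_dim_subspace)
  finally have le: "aff_dim ?R \<le> 1" .
  have "a \<in> ?R" by (auto intro!: exI[of _ 1])
  moreover have "2 *\<^sub>R a \<in> ?R" by auto
  moreover have "2 *\<^sub>R a \<noteq> a" using assms by (metis scaleR_cancel_right scaleR_one zero_neq_numeral
      numeral_One numeral_eq_iff semiring_norm(85))
  ultimately have "\<not> (\<exists>b. ?R = {b})" by (metis singletonD)
  then have "aff_dim ?R \<noteq> 0" by (simp add: aff_dim_eq_0)
  moreover have "?R \<noteq> {}" using \<open>a \<in> ?R\<close> by blast
  then have "aff_dim ?R \<noteq> -1" by (simp add: aff_dim_empty)
  ultimately show ?thesis using le aff_dim_geq[of ?R] by linarith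
qed

lemma Rats_common_denominator:
  assumes "finite X" "X \<subseteq> \<rat>"
  shows "\<exists>D::nat. 0 < D \<and> (\<forall>x\<in>X. real D * x \<in> \<int>)"
  using assms
proof (induction X rule: finite_induct)
  case empty then show ?case by (auto intro!: exI[of _ 1])
next
  case (insert x X)
  then obtain D :: nat where D: "0 < D" "\<forall>y\<in>X. real D * y \<in> \<int>" by auto
  from insert have "x \<in> \<rat>" by auto
  then obtain p q where pq: "0 < q" "x = of_int p / of_int q" by (rule Rats_cases')
  have "real (D * nat q) * y \<in> \<int>" if "y \<in> X" for y
  proof -
    have "real (D * nat q) * y = of_int q * (real D * y)" using pq by simp
    then show ?thesis using D that by (metis Ints_mult Ints_of_int)
  qed
  moreover have "real (D * nat q) * x \<in> \<int>" using pq by simp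
  ultimately show ?case using D pq by (intro exI[of _ "D * nat q"]) auto
qed

lemma rational_vector_primitive_multiple:
  fixes x :: "real ^ 'n"
  assumes "\<forall>i. x$i \<in> \<rat>" "x \<in> nonneg_orthant" "x \<noteq> 0"
  obtains k :: "nat ^ 'n" and t where "0 < t" "expv k = t *\<^sub>R x" "Gcd (range (\<lambda>i. k$i)) = 1"
proof -
  obtain D :: nat where D: "0 < D" "\<forall>y\<in>range (\<lambda>i. x$i). real D * y \<in> \<int>"
    using Rats_common_denominator[of "range (\<lambda>i. x$i)"] assms(1) by auto
  define k0 where "k0 = (\<chi> i. nat \<lfloor>real D * x$i\<rfloor>)"
  have k0: "real (k0$i) = real D * x$i" for i
  proof -
    have "real D * x$i \<in> \<int>" "0 \<le> real D * x$i"
      using D assms(2) by (auto simp: nonneg_orthant_def)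
    then show ?thesis unfolding k0_def
      by (metis Ints_cases floor_of_int of_int_0_le_iff of_nat_nat of_int_of_nat_eq vec_lambda_beta)
  qed
  obtain j where "x$j \<noteq> 0" using assms(3) by (metis vec_eq_iff zero_index)
  then have "k0$j \<noteq> 0" using k0[of j] D by (metis of_nat_0 mult_eq_0_iff of_nat_0_less_iff less_irrefl)
  define g where "g = Gcd (range (\<lambda>i. k0$i))"
  have "g \<noteq> 0" unfolding g_def using \<open>k0$j \<noteq> 0\<close> by (auto simp: subset_iff)
  define k where "k = (\<chi> i. k0$i div g)"
  have k0k: "k0$i = g * k$i" for i
    unfolding k_def g_def by (simp add: Gcd_dvd)
  then have "range (\<lambda>i. k0$i) = (*) g ` range (\<lambda>i. k$i)" by auto
  then have "g = Gcd ((*) g ` range (\<lambda>i. k$i))" by (simp add: g_def)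
  then have "g = g * Gcd (range (\<lambda>i. k$i))" by (simp add: Gcd_mult)
  then have "Gcd (range (\<lambda>i. k$i)) = 1" using \<open>g \<noteq> 0\<close> by simp
  moreover have "expv k = (real D / real g) *\<^sub>R x"
    using k0 k0k \<open>g \<noteq> 0\<close> by (simp add: expv_def vec_eq_iff field_simps)
  moreover have "0 < real D / real g" using D \<open>g \<noteq> 0\<close> by simp
  ultimately show ?thesis using that by blast
qed

lemma exists_rat_linear_functional:
  obtains \<phi> :: "real \<Rightarrow> rat"
  where "\<And>x y. \<phi> (x + y) = \<phi> x + \<phi> y" "\<And>q x. \<phi> (of_rat q * x) = q * \<phi> x" "\<phi> 1 = 1"
proof -
  interpret real_over_rat: vector_space "\<lambda>q::rat. \<lambda>x::real. of_rat q * x"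
    by unfold_locales (auto simp: algebra_simps of_rat_add of_rat_mult)
  interpret rat_over_rat: vector_space "\<lambda>q::rat. \<lambda>x::rat. q * x"
    by unfold_locales (auto simp: algebra_simps)
  interpret vector_space_pair "\<lambda>q::rat. \<lambda>x::real. of_rat q * x" "\<lambda>q::rat. \<lambda>x::rat. q * x" ..
  have "real_over_rat.independent {1}"
    by (simp add: real_over_rat.independent_insert real_over_rat.span_empty)
  then obtain g where "Vector_Spaces.linear (\<lambda>q::rat. \<lambda>x::real. of_rat q * x) (\<lambda>q. \<lambda>x. q * x) g"
    "g 1 = 1"
    using linear_independent_extend[of "{1}" "\<lambda>_. 1"] by auto
  then show ?thesis
    using that[of g] by (auto simp: Vector_Spaces.linear_iff_module_hom module_hom_iff)
qed

lemma fcone_extreme_point: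
  fixes c :: "nat ^ 'n \<Rightarrow> real"
  assumes fin: "finite (supp c)" and ne: "supp c \<noteq> {}"
    and z: "z extreme_point_of dual_polyhedron c"
  shows "fcone c z = {t *\<^sub>R z | t. 0 < t}"
proof
  have zN: "z \<in> nonneg_orthant" using z by (simp add: extreme_point_of_def dual_polyhedron_def)
  have zmf: "mf c z = 1" using extreme_point_dual_polyhedron_mf[OF fin ne z] .
  obtain nu0 where nu0: "nu0 \<in> supp c" "z \<bullet> expv nu0 = 1" using mf_attained[OF fin ne zN] zmf by metis
  have axis_N: "axis i 1 \<in> nonneg_orthant" for i by (simp add: nonneg_orthant_def axis_def)
  show "fcone c z \<subseteq> {t *\<^sub>R z | t. 0 < t}"
  proof
    fix b assume "b \<in> fcone c z"
    then have bN: "b \<in> nonneg_orthant" and gb: "gammaf c b = gammaf c z" by (auto simp: fcone_def)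
    have b_face: "b \<bullet> v = mf c b" if "v \<in> newton c" "z \<bullet> v = 1" for v
      using that zmf gb by (auto simp: gammaf_def)
    have "b$i = 0" if "z$i = 0" for i
      using b_face[OF expv_add_in_newton[OF nu0(1) axis_N]] b_face[OF expv_in_newton[OF nu0(1)]]
        nu0(2) that by (simp add: inner_add_right inner_axis)
    then have "b - mf c b *\<^sub>R z = 0"
      using b_face expv_in_newton
      by (intro extreme_point_dual_polyhedron_rigid[OF fin z]) (auto simp: inner_diff_left)
    then have b_eq: "b = mf c b *\<^sub>R z" by simp
    have "mf c b \<noteq> 0"
    proof
      assume "mf c b = 0"
      then have "gammaf c z = newton c" using b_eq gb gammaf_zero[OF fin ne] by simp
      then have on_face: "z \<bullet> v = 1" if "v \<in> newton c" for v using that zmf by (auto simp: gammaf_def)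
      obtain j where "z$j \<noteq> 0" using nu0 by (metis inner_zero_left vec_eq_iff zero_index zero_neq_one)
      moreover have "z \<bullet> (expv nu0 + axis j 1) = 1"
        using on_face expv_add_in_newton[OF nu0(1) axis_N] by blast
      ultimately show False using nu0(2) by (simp add: inner_add_right inner_axis)
    qed
    then show "b \<in> {t *\<^sub>R z | t. 0 < t}" using b_eq mf_nonneg[OF fin ne bN] by force
  qed
  show "{t *\<^sub>R z | t. 0 < t} \<subseteq> fcone c z"
    using gammaf_scaleR[OF fin ne zN] scaleR_nonneg_orthant[OF zN] by (auto simp: fcone_def)
qed

text \<open>Applied coordinatewise, a \<rat>-linear functional \<phi> with \<phi> 1 = 1 preserves the active
  constraints, which have integer coefficients; so z - \<phi>(z) is zero by rigidity.\<close>
lemma extreme_point_rational: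
  fixes c :: "nat ^ 'n \<Rightarrow> real"
  assumes fin: "finite (supp c)" and ne: "supp c \<noteq> {}"
    and z: "z extreme_point_of dual_polyhedron c"
  shows "z$i \<in> \<rat>"
proof -
  obtain \<phi> :: "real \<Rightarrow> rat" where \<phi>: "\<And>x y. \<phi> (x + y) = \<phi> x + \<phi> y"
    "\<And>q x. \<phi> (of_rat q * x) = q * \<phi> x" "\<phi> 1 = 1"
    using exists_rat_linear_functional by blast
  have \<phi>_0: "\<phi> 0 = 0" using \<phi>(2)[of 0 1] by simp
  have \<phi>_sum: "\<phi> (sum f A) = (\<Sum>i\<in>A. \<phi> (f i))" for f and A :: "'n set"
    by (induction A rule: infinite_finite_induct) (auto simp: \<phi>_0 \<phi>(1))
  define \<psi> :: "real ^ 'n" where "\<psi> = (\<chi> i. of_rat (\<phi> (z$i)))"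
  have "\<psi> \<bullet> expv nu = of_rat (\<phi> (z \<bullet> expv nu))" for nu
  proof -
    have "\<phi> (z$i * real (nu$i)) = of_nat (nu$i) * \<phi> (z$i)" for i
      using \<phi>(2)[of "of_nat (nu$i)" "z$i"] by (simp add: mult.commute)
    then show ?thesis
      by (simp add: inner_expv \<psi>_def \<phi>_sum of_rat_sum of_rat_mult mult.commute)
  qed
  then have "z - \<psi> = 0"
    by (intro extreme_point_dual_polyhedron_rigid[OF fin z]) (auto simp: \<psi>_def \<phi>_0 \<phi>(3) inner_diff_left)
  then show ?thesis by (metis \<psi>_def vec_lambda_beta Rats_of_rat right_minus_eq)
qed

lemma extreme_point_Gamma1_plus:
  fixes c :: "nat ^ 'n \<Rightarrow> real"
  assumes fin: "finite (supp c)" and ne: "supp c \<noteq> {}"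
    and z: "z extreme_point_of dual_polyhedron c"
  obtains r where "r \<in> Gamma1_plus c" "ssum r / mf c r = ssum z"
proof -
  have zN: "z \<in> nonneg_orthant" using z by (simp add: extreme_point_of_def dual_polyhedron_def)
  have zmf: "mf c z = 1" using extreme_point_dual_polyhedron_mf[OF fin ne z] .
  then have "z \<noteq> 0" using mf_scaleR[OF fin ne zN, of 0] by auto
  obtain k :: "nat ^ 'n" and t where kt: "0 < t" "expv k = t *\<^sub>R z" "Gcd (range (\<lambda>i. k$i)) = 1"
    using rational_vector_primitive_multiple extreme_point_rational[OF fin ne z] zN \<open>z \<noteq> 0\<close> by metis
  have "fcone c (expv k) = fcone c z"
    using gammaf_scaleR[OF fin ne zN kt(1)] kt(2) by (simp add: fcone_def)
  then have "aff_dim (fcone c (expv k)) = 1"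
    using fcone_extreme_point[OF fin ne z] aff_dim_open_ray[OF \<open>z \<noteq> 0\<close>] by simp
  then have "expv k \<in> Gamma1 c" using kt(3) unfolding Gamma1_def by blast
  moreover have "mf c (expv k) = t" using mf_scaleR[OF fin ne zN, of t] kt zmf by simp
  ultimately have "expv k \<in> Gamma1_plus c" using kt(1) by (simp add: Gamma1_plus_def)
  moreover have "ssum (expv k) / mf c (expv k) = ssum z"
    using \<open>mf c (expv k) = t\<close> kt by (simp add: ssum_scaleR)
  ultimately show ?thesis using that by blast
qed

lemma Gamma1_plus_nonneg_orthant: "a \<in> Gamma1_plus c \<Longrightarrow> a \<in> nonneg_orthant"
  using expv_nonneg by (auto simp: Gamma1_plus_def Gamma1_def)

lemma Gamma1_plus_normalized:
  assumes fin: "finite (supp c)" and ne: "supp c \<noteq> {}" and a: "a \<in> Gamma1_plus c"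
  defines "b \<equiv> (1 / mf c a) *\<^sub>R a"
  shows "b \<in> nonneg_orthant" "mf c b = 1" "hf c b = 1 - ssum a / mf c a"
proof -
  have aN: "a \<in> nonneg_orthant" and "0 < mf c a"
    using a Gamma1_plus_nonneg_orthant by (auto simp: Gamma1_plus_def)
  then show "b \<in> nonneg_orthant" "mf c b = 1"
    using scaleR_nonneg_orthant[OF aN] mf_scaleR[OF fin ne aN] by (simp_all add: b_def)
  then show "hf c b = 1 - ssum a / mf c a" by (simp add: hf_def b_def ssum_scaleR)
qed

lemma hf_le_Gamma1_plus:
  assumes fin: "finite (supp c)" and ne: "supp c \<noteq> {}"
    and aN: "a \<in> nonneg_orthant" and "mf c a \<le> 1" and "0 < hf c a"
  obtains r where "r \<in> Gamma1_plus c" "hf c a \<le> 1 - ssum r / mf c r"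
proof -
  define m where "m = mf c a"
  have "0 < m" using assms ssum_nonneg[OF aN] by (simp add: hf_def m_def)
  define b where "b = (1 / m) *\<^sub>R a"
  have bN: "b \<in> nonneg_orthant" using scaleR_nonneg_orthant[OF aN] \<open>0 < m\<close> by (simp add: b_def)
  have "mf c b = 1" using mf_scaleR[OF fin ne aN, of "1 / m"] \<open>0 < m\<close> by (simp add: b_def m_def)
  then have "hf c b = hf c a / m" using \<open>0 < m\<close> by (simp add: hf_def b_def ssum_scaleR m_def field_simps)
  also have "\<dots> \<ge> hf c a" using assms \<open>0 < m\<close> by (simp add: m_def field_simps)
  finally have a_le_b: "hf c a \<le> 1 - ssum b" using \<open>mf c b = 1\<close> by (simp add: hf_def)
  have "b \<in> dual_polyhedron c" using bN \<open>mf c b = 1\<close> dual_polyhedron_iff[OF fin ne] by simp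
  then obtain z where z: "z extreme_point_of dual_polyhedron c" "ssum z \<le> ssum b"
    by (rule dual_polyhedron_extreme_point_below)
  obtain r where "r \<in> Gamma1_plus c" "ssum r / mf c r = ssum z"
    using extreme_point_Gamma1_plus[OF fin ne z(1)] .
  then show ?thesis using that a_le_b z(2) by fastforce
qed

lemma bdd_above_hf_R1: "bdd_above {hf c a | a. a \<in> nonneg_orthant \<and> 0 \<le> mf c a \<and> mf c a \<le> 1}"
  unfolding bdd_above_def using ssum_nonneg by (force simp: hf_def intro!: exI[of _ 1])

lemma bdd_above_leading_exponent_terms:
  "bdd_above ({0} \<union> {1 - ssum a / mf c a | a. a \<in> Gamma1_plus c})"
  unfolding bdd_above_def using ssum_nonneg[OF Gamma1_plus_nonneg_orthant[of _ c]]
  by (auto simp: Gamma1_plus_def intro!: exI[of _ 1] divide_nonneg_pos)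

lemma leading_exponent_le_Sup_hf_R1:
  assumes fin: "finite (supp c)" and ne: "supp c \<noteq> {}"
  shows "leading_exponent c \<le> Sup {hf c a | a. a \<in> nonneg_orthant \<and> 0 \<le> mf c a \<and> mf c a \<le> 1}"
    (is "_ \<le> Sup ?R")
  unfolding leading_exponent_def
proof (rule cSup_subset_mono)
  have "0 \<in> ?R"
    using mf_scaleR[OF fin ne, of 0 0] by (auto simp: hf_def ssum_def nonneg_orthant_def intro!: exI[of _ 0])
  moreover have "1 - ssum a / mf c a \<in> ?R" if "a \<in> Gamma1_plus c" for a
  proof -
    note normalized = Gamma1_plus_normalized[OF fin ne that]
    then show ?thesis unfolding normalized(3)[symmetric] by (intro CollectI exI conjI) auto
  qed
  ultimately show "{0} \<union> {1 - ssum a / mf c a | a. a \<in> Gamma1_plus c} \<subseteq> ?R" by blast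
qed (use bdd_above_hf_R1 in auto)

lemma Sup_hf_R1_le_leading_exponent:
  assumes fin: "finite (supp c)" and ne: "supp c \<noteq> {}"
  shows "Sup {hf c a | a. a \<in> nonneg_orthant \<and> 0 \<le> mf c a \<and> mf c a \<le> 1} \<le> leading_exponent c"
  unfolding leading_exponent_def
proof (rule cSup_least)
  let ?L = "{0} \<union> {1 - ssum a / mf c a | a. a \<in> Gamma1_plus c}"
  fix x assume "x \<in> {hf c a | a. a \<in> nonneg_orthant \<and> 0 \<le> mf c a \<and> mf c a \<le> 1}"
  then obtain a where a: "a \<in> nonneg_orthant" "mf c a \<le> 1" "x = hf c a" by auto
  have "0 \<le> Sup ?L" using bdd_above_leading_exponent_terms by (intro cSup_upper) auto
  moreover have "x \<le> Sup ?L" if pos: "0 < x"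
  proof -
    obtain r where "r \<in> Gamma1_plus c" "x \<le> 1 - ssum r / mf c r"
      using hf_le_Gamma1_plus[OF fin ne a(1,2)] a(3) pos by blast
    moreover have "1 - ssum r / mf c r \<le> Sup ?L"
      using \<open>r \<in> Gamma1_plus c\<close> bdd_above_leading_exponent_terms by (intro cSup_upper) auto
    ultimately show ?thesis by linarith
  qed
  ultimately show "x \<le> Sup ?L" by (cases "0 < x") auto
next
  show "{hf c a | a. a \<in> nonneg_orthant \<and> 0 \<le> mf c a \<and> mf c a \<le> 1} \<noteq> {}"
    using mf_scaleR[OF fin ne, of 0 0] by (auto simp: nonneg_orthant_def intro!: exI[of _ 0])
qed

theorem mainTheorem5:
  fixes c :: "nat ^ 'n \<Rightarrow> real"
  assumes "finite (supp c)"
    and "supp c \<noteq> {}"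
    and "nondegenerate c"
    and "polyfun c UNIV 0 = 0"
  shows "leading_exponent c =
           Sup {hf c a | a. a \<in> nonneg_orthant \<and> 0 \<le> mf c a \<and> mf c a \<le> 1}"
  using leading_exponent_le_Sup_hf_R1[OF assms(1,2)] Sup_hf_R1_le_leading_exponent[OF assms(1,2)]
  by (rule antisym)

end
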